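(* Let $T$ be a tree on $n\geq 4$ vertices. Then the node reliability polynomial $\mathrm{nRel}(T;p)$ has at least one point of inflection in $(0,1)$ (a point in $(0,1)$ at which the second derivative changes sign).
   Context: For a graph $G$ on $n$ vertices, a connected set is a nonempty vertex subset $C$ such that the induced subgraph $G[C]$ is connected. The node reliability of $G$ is the polynomial \[ \mathrm{nRel}(G;p)=\sum_{C}p^{|C|}(1-p)^{n-|C|}, \] the sum over all connected sets $C$ of $G$. *)

theory Defs
  imports "HOL-Analysis.Analysis"
begin

definition simple_graph :: "'a set \<Rightarrow> ('a \<Rightarrow> 'a \<Rightarrow> bool) \<Rightarrow> bool" where
  "simple_graph V E \<longleftrightarrow> finite V \<and>
     (\<forall>u v. E u v \<longrightarrow> u \<in> V \<and> v \<in> V \<and> u \<noteq> v \<and> E v u)"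

definition edges :: "'a set \<Rightarrow> ('a \<Rightarrow> 'a \<Rightarrow> bool) \<Rightarrow> 'a set set" where
  "edges V E = {{u, v} | u v. u \<in> V \<and> v \<in> V \<and> E u v}"

definition connected_set :: "'a set \<Rightarrow> ('a \<Rightarrow> 'a \<Rightarrow> bool) \<Rightarrow> 'a set \<Rightarrow> bool" where
  "connected_set V E C \<longleftrightarrow> C \<noteq> {} \<and> C \<subseteq> V \<and>
     (\<forall>u\<in>C. \<forall>v\<in>C. (\<lambda>x y. E x y \<and> x \<in> C \<and> y \<in> C)\<^sup>*\<^sup>* u v)"

definition graph_connected :: "'a set \<Rightarrow> ('a \<Rightarrow> 'a \<Rightarrow> bool) \<Rightarrow> bool" where
  "graph_connected V E \<longleftrightarrow> connected_set V E V"

definition is_tree :: "'a set \<Rightarrow> ('a \<Rightarrow> 'a \<Rightarrow> bool) \<Rightarrow> bool" where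
  "is_tree V E \<longleftrightarrow> simple_graph V E \<and> graph_connected V E \<and> card (edges V E) = card V - 1"

definition nRel :: "'a set \<Rightarrow> ('a \<Rightarrow> 'a \<Rightarrow> bool) \<Rightarrow> real \<Rightarrow> real" where
  "nRel V E p = (\<Sum>C\<in>{C. connected_set V E C}. p ^ card C * (1 - p) ^ (card V - card C))"

definition inflection_point :: "(real \<Rightarrow> real) \<Rightarrow> real \<Rightarrow> bool" where
  "inflection_point f x \<longleftrightarrow> (\<exists>d>0.
     ((\<forall>y. x - d < y \<and> y < x \<longrightarrow> deriv (deriv f) y < 0) \<and>
      (\<forall>y. x < y \<and> y < x + d \<longrightarrow> deriv (deriv f) y > 0)) \<or>
     ((\<forall>y. x - d < y \<and> y < x \<longrightarrow> deriv (deriv f) y > 0) \<and>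
      (\<forall>y. x < y \<and> y < x + d \<longrightarrow> deriv (deriv f) y < 0)))"

end

theory Submission
  imports Defs "HOL-Computational_Algebra.Polynomial"
begin

text \<open>The node reliability f of a tree on n vertices is a polynomial with f(0) = 0, f(1) = 1,
  f'(0) = n (only singletons contribute) and f'(1) = n minus the number of connected (n-1)-sets.
  A tree on at least 3 vertices has a cut vertex (without one every vertex would have degree at
  least 2, giving at least n edges), so f'(1) \<ge> 1. Since f'(0) > f(1) - f(0) = 1 \<le> f'(1),
  the mean value theorem makes f'' negative somewhere and positive somewhere in (0, 1), and a real
  polynomial taking both signs changes sign at a root of odd multiplicity.\<close>

lemma isCont_sign_stable:
  fixes h :: "real \<Rightarrow> real"
  assumes "isCont h x" and "h x \<noteq> 0"
  shows "\<exists>e>0. \<forall>y. \<bar>y - x\<bar> < e \<longrightarrow> h x * h y > 0"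
proof -
  have "((\<lambda>y. h x * h y) \<longlongrightarrow> h x * h x) (nhds x)"
    using assms(1) by (intro tendsto_intros) (simp add: isCont_def tendsto_at_iff_tendsto_nhds)
  moreover have "h x * h x > 0" using assms(2) by (simp add: not_square_less_zero less_le)
  ultimately have "eventually (\<lambda>y. h x * h y > 0) (nhds x)" by (rule order_tendstoD)
  then show ?thesis by (simp add: eventually_nhds_metric dist_real_def)
qed

text \<open>Phrased with products, so that both sign patterns allowed by inflection_point are covered.\<close>
definition changes_sign_at :: "(real \<Rightarrow> real) \<Rightarrow> real \<Rightarrow> bool" where
  "changes_sign_at f x \<longleftrightarrow>
     (\<exists>d>0. \<forall>y z. x - d < y \<and> y < x \<and> x < z \<and> z < x + d \<longrightarrow> f y * f z < 0)"

lemma changes_sign_at_mult: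
  assumes "changes_sign_at f x" and "isCont h x" and "h x \<noteq> 0"
  shows "changes_sign_at (\<lambda>y. h y * f y) x"
proof -
  obtain d where d: "d > 0" "\<And>y z. x - d < y \<Longrightarrow> y < x \<Longrightarrow> x < z \<Longrightarrow> z < x + d \<Longrightarrow> f y * f z < 0"
    using assms(1) unfolding changes_sign_at_def by blast
  obtain e where e: "e > 0" "\<And>y. \<bar>y - x\<bar> < e \<Longrightarrow> h x * h y > 0"
    using isCont_sign_stable[OF assms(2,3)] by blast
  have "h y * f y * (h z * f z) < 0"
    if "x - min d e < y" "y < x" "x < z" "z < x + min d e" for y z
  proof -
    have "h x * h x * (h y * h z) > 0"
      using mult_pos_pos[OF e(2) e(2), of y z] that by (simp add: ac_simps)
    then have "h y * h z > 0"
      by (simp add: zero_less_mult_iff)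
    moreover have "f y * f z < 0" using d that by simp
    ultimately have "(h y * h z) * (f y * f z) < 0" by (rule mult_pos_neg)
    then show ?thesis by (simp add: ac_simps)
  qed
  then show ?thesis unfolding changes_sign_at_def using d(1) e(1) by (intro exI[of _ "min d e"]) auto
qed

lemma changes_sign_at_imp_zero:
  assumes "changes_sign_at f x" and "isCont f x"
  shows "f x = 0"
proof (rule ccontr)
  assume "f x \<noteq> 0"
  with assms have "changes_sign_at (\<lambda>y. f y * f y) x" by (intro changes_sign_at_mult)
  then obtain d where d: "d > 0"
    "\<And>y z. x - d < y \<Longrightarrow> y < x \<Longrightarrow> x < z \<Longrightarrow> z < x + d \<Longrightarrow> f y * f y * (f z * f z) < 0"
    unfolding changes_sign_at_def by blast
  have "f (x - d/2) * f (x - d/2) * (f (x + d/2) * f (x + d/2)) < 0"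
    using d by (intro d(2)) auto
  then show False by (simp add: mult_less_0_iff)
qed

text \<open>Split off a root r of multiplicity k: for odd k the sign changes at r, for even k the
  cofactor of smaller degree still changes sign between a and b.\<close>
lemma poly_changes_sign_between:
  fixes q :: "real poly"
  assumes "a < b" and "poly q a * poly q b < 0"
  shows "\<exists>x\<in>{a<..<b}. changes_sign_at (poly q) x"
  using assms
proof (induction "degree q" arbitrary: q rule: less_induct)
  case less
  then have "q \<noteq> 0" by auto
  obtain r where r: "a < r" "r < b" "poly q r = 0" using poly_IVT[OF less.prems] by blast
  define k where "k = order r q"
  obtain g where q: "q = [:-r, 1:] ^ k * g" and "\<not> [:-r, 1:] dvd g"
    using order_decomp[OF \<open>q \<noteq> 0\<close>] unfolding k_def by blast
  then have gr: "poly g r \<noteq> 0" by (simp add: poly_eq_0_iff_dvd)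
  have poly_q: "poly q = (\<lambda>y. (y - r) ^ k * poly g y)"
    using q by (simp add: poly_power fun_eq_iff)
  show ?case
  proof (cases "odd k")
    case True
    have "changes_sign_at (\<lambda>y. (y - r) ^ k) r"
      unfolding changes_sign_at_def using True
      by (intro exI[of _ 1]) (auto intro: mult_neg_pos simp: power_less_zero_eq)
    then have "changes_sign_at (\<lambda>y. poly g y * (y - r) ^ k) r"
      by (rule changes_sign_at_mult) (simp_all add: gr)
    then show ?thesis using r by (auto simp: poly_q mult.commute)
  next
    case False
    have "k \<noteq> 0" using r(3) \<open>q \<noteq> 0\<close> order_root k_def by blast
    have "0 \<le> (a - r) ^ k * (b - r) ^ k" using False by (simp add: zero_le_even_power)
    moreover have "poly q a * poly q b = (a - r) ^ k * (b - r) ^ k * (poly g a * poly g b)"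
      by (simp add: poly_q ac_simps)
    ultimately have "poly g a * poly g b < 0"
      using less.prems(2) by (smt (verit) mult_nonneg_nonneg)
    moreover have "degree q = k + degree g"
      using gr unfolding q by (subst degree_mult_eq) (auto simp: degree_linear_power)
    then have "degree g < degree q" using \<open>k \<noteq> 0\<close> by simp
    ultimately obtain x where x: "x \<in> {a<..<b}" "changes_sign_at (poly g) x"
      using less.hyps less.prems(1) by blast
    then have "x \<noteq> r" using gr changes_sign_at_imp_zero by fastforce
    have "changes_sign_at (\<lambda>y. (y - r) ^ k * poly g y) x"
      using x(2) by (rule changes_sign_at_mult) (use \<open>x \<noteq> r\<close> in simp_all)
    then show ?thesis using x(1) by (auto simp: poly_q)
  qed
qed

lemma poly_changes_sign_in_interval:
  fixes q :: "real poly"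
  assumes "a \<in> {l<..<u}" and "b \<in> {l<..<u}" and "poly q a < 0" and "poly q b > 0"
  shows "\<exists>x\<in>{l<..<u}. changes_sign_at (poly q) x"
proof -
  have "a \<noteq> b" using assms(3,4) by auto
  then consider "a < b" | "b < a" by linarith
  then have "\<exists>x\<in>{min a b<..<max a b}. changes_sign_at (poly q) x"
  proof cases
    case 1
    then show ?thesis using poly_changes_sign_between[of a b] assms(3,4) by (simp add: mult_neg_pos)
  next
    case 2
    then show ?thesis using poly_changes_sign_between[of b a] assms(3,4) by (simp add: mult_pos_neg)
  qed
  moreover have "{min a b<..<max a b} \<subseteq> {l<..<u}" using assms(1,2) by auto
  ultimately show ?thesis by blast
qed

lemma poly_pderiv2_neg_if_pderiv_gt_secant:
  fixes P :: "real poly"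
  assumes "poly P 1 - poly P 0 < poly (pderiv P) 0"
  shows "\<exists>a\<in>{0<..<1}. poly (pderiv (pderiv P)) a < 0"
proof -
  obtain z where z: "0 < z" "z < 1" "poly P 1 - poly P 0 = poly (pderiv P) z"
    using poly_MVT[of 0 1 P] by auto
  obtain a where a: "0 < a" "a < z"
    "poly (pderiv P) z - poly (pderiv P) 0 = z * poly (pderiv (pderiv P)) a"
    using poly_MVT[OF z(1), of "pderiv P"] by auto
  have "z * poly (pderiv (pderiv P)) a < 0" using a(3) z(3) assms by simp
  then have "poly (pderiv (pderiv P)) a < 0" using z(1) by (simp add: mult_less_0_iff)
  then show ?thesis using a z by auto
qed

text \<open>Otherwise the derivative decreases, so it is at least the secant slope on [0, 1] and
  strictly above it near 0; the mean value theorem on [0, c] and [c, 1] then makes the secant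
  slope exceed itself.\<close>
lemma poly_pderiv2_pos_if_pderiv_ge_secant:
  fixes P :: "real poly"
  assumes "poly P 1 - poly P 0 < poly (pderiv P) 0" and "poly P 1 - poly P 0 \<le> poly (pderiv P) 1"
  shows "\<exists>b\<in>{0<..<1}. poly (pderiv (pderiv P)) b > 0"
proof (rule ccontr)
  define s where "s = poly P 1 - poly P 0"
  assume "\<not> ?thesis"
  then have nonpos: "poly (pderiv (pderiv P)) x \<le> 0" if "0 < x" "x < 1" for x
    using that by force
  have antimono: "poly (pderiv P) v \<le> poly (pderiv P) u" if "0 \<le> u" "u \<le> v" "v \<le> 1" for u v
    using that(2)
  proof (rule DERIV_nonpos_imp_decreasing_open)
    show "\<exists>y. (poly (pderiv P) has_real_derivative y) (at x) \<and> y \<le> 0" if "u < x" "x < v" for x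
      using nonpos[of x] that \<open>0 \<le> u\<close> \<open>v \<le> 1\<close> by (intro exI[of _ "poly (pderiv (pderiv P)) x"]) auto
  qed (auto intro: continuous_intros)
  have "((\<lambda>y. poly (pderiv P) y) \<longlongrightarrow> poly (pderiv P) 0) (at_right 0)"
    by (intro tendsto_intros)
  then have "\<forall>\<^sub>F y in at_right 0. s < poly (pderiv P) y"
    using assms(1) unfolding s_def by (rule order_tendstoD)
  moreover have "\<forall>\<^sub>F y in at_right 0. 0 < y \<and> y < (1::real)"
    by (auto simp: eventually_at_right_field intro: exI[of _ 1])
  ultimately obtain c where c: "0 < c" "c < 1" "s < poly (pderiv P) c"
    using eventually_happens'[OF trivial_limit_at_right_real] eventually_conj by blast
  obtain z1 where z1: "0 < z1" "z1 < c" "poly P c - poly P 0 = c * poly (pderiv P) z1"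
    using poly_MVT[OF c(1), of P] by auto
  obtain z2 where z2: "c < z2" "z2 < 1" "poly P 1 - poly P c = (1 - c) * poly (pderiv P) z2"
    using poly_MVT[OF c(2), of P] by auto
  have "c * s < c * poly (pderiv P) z1"
    using c antimono[of z1 c] z1 by (intro mult_strict_left_mono) auto
  moreover have "(1 - c) * s \<le> (1 - c) * poly (pderiv P) z2"
    using c antimono[of z2 1] z2 assms(2) unfolding s_def by (intro mult_left_mono) auto
  ultimately have "c * s + (1 - c) * s < s" using z1(3) z2(3) unfolding s_def by linarith
  then show False by (simp add: algebra_simps)
qed

lemma inflection_point_if_changes_sign:
  assumes "changes_sign_at (deriv (deriv f)) x"
  shows "inflection_point f x"
proof -
  define h where "h = deriv (deriv f)"
  obtain d where d: "d > 0"
    "\<And>y z. x - d < y \<Longrightarrow> y < x \<Longrightarrow> x < z \<Longrightarrow> z < x + d \<Longrightarrow> h y * h z < 0"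
    using assms unfolding changes_sign_at_def h_def by blast
  have left: "h y * h (x + d/2) < 0" if "x - d < y" "y < x" for y
    using d that by simp
  have right: "h (x - d/2) * h z < 0" if "x < z" "z < x + d" for z
    using d that by simp
  have "h (x - d/2) * h (x + d/2) < 0" using left d(1) by simp
  then consider "h (x - d/2) < 0" "h (x + d/2) > 0" | "h (x - d/2) > 0" "h (x + d/2) < 0"
    by (auto simp: mult_less_0_iff)
  then show ?thesis
  proof cases
    case 1
    have "h y < 0" if "x - d < y" "y < x" for y
      using left[OF that] 1 by (simp add: mult_less_0_iff)
    moreover have "h z > 0" if "x < z" "z < x + d" for z
      using right[OF that] 1 by (simp add: mult_less_0_iff)
    ultimately show ?thesis unfolding inflection_point_def h_def[symmetric] using d(1) by blast
  next
    case 2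
    have "h y > 0" if "x - d < y" "y < x" for y
      using left[OF that] 2 by (simp add: mult_less_0_iff)
    moreover have "h z < 0" if "x < z" "z < x + d" for z
      using right[OF that] 2 by (simp add: mult_less_0_iff)
    ultimately show ?thesis unfolding inflection_point_def h_def[symmetric] using d(1) by blast
  qed
qed

lemma rtranclp_induced_first_edge:
  assumes "(\<lambda>x y. E x y \<and> x \<in> C \<and> y \<in> C)\<^sup>*\<^sup>* u v" and "u \<noteq> v"
  shows "\<exists>w\<in>C. E u w"
  using assms by (induction rule: converse_rtranclp_induct) auto

lemma two_neighbours_if_no_cut_vertex:
  assumes sg: "simple_graph V E" and gc: "graph_connected V E" and "card V \<ge> 3"
    and no_cut: "\<forall>w\<in>V. connected_set V E (V - {w})" and v: "v \<in> V"
  shows "\<exists>u1 u2. u1 \<noteq> u2 \<and> E v u1 \<and> E v u2"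
proof -
  have fin: "finite V" using sg unfolding simple_graph_def by simp
  have "card (V - {v}) \<ge> 2" using assms(3) v fin by simp
  then have "V - {v} \<noteq> {}" by (intro notI) simp
  then obtain w where w: "w \<in> V" "v \<noteq> w" by blast
  have "(\<lambda>x y. E x y \<and> x \<in> V \<and> y \<in> V)\<^sup>*\<^sup>* v w"
    using gc v w unfolding graph_connected_def connected_set_def by simp
  from rtranclp_induced_first_edge[OF this w(2)] obtain u1 where u1: "u1 \<in> V" "E v u1" by blast
  then have "v \<noteq> u1" using sg unfolding simple_graph_def by auto
  then have "card (V - {v, u1}) \<ge> 1" using assms(3) u1 v fin by (simp add: card_Diff_subset)
  then have "V - {v, u1} \<noteq> {}" by (intro notI) simp
  then obtain w' where w': "w' \<in> V" "v \<noteq> w'" "w' \<noteq> u1" by blast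
  have "(\<lambda>x y. E x y \<and> x \<in> V - {u1} \<and> y \<in> V - {u1})\<^sup>*\<^sup>* v w'"
    using no_cut u1 v w' \<open>v \<noteq> u1\<close> unfolding connected_set_def by simp
  from rtranclp_induced_first_edge[OF this w'(2)] obtain u2 where "u2 \<in> V - {u1}" "E v u2" by blast
  then show ?thesis using u1 by blast
qed

lemma sum_degree_eq_twice_card_edges:
  assumes "simple_graph V E"
  shows "(\<Sum>v\<in>V. card {e\<in>edges V E. v \<in> e}) = 2 * card (edges V E)"
proof -
  have fin: "finite V" using assms unfolding simple_graph_def by simp
  have sub: "edges V E \<subseteq> Pow V" unfolding edges_def by auto
  then have fin_edges: "finite (edges V E)" using fin finite_subset by blast
  have "(\<Sum>v\<in>V. card {e\<in>edges V E. v \<in> e}) = (\<Sum>v\<in>V. \<Sum>e\<in>edges V E. of_bool (v \<in> e))"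
    using fin_edges by (simp add: Int_def conj_commute)
  also have "\<dots> = (\<Sum>e\<in>edges V E. \<Sum>v\<in>V. of_bool (v \<in> e))"
    by (rule sum.swap)
  also have "\<dots> = (\<Sum>e\<in>edges V E. card e)"
  proof (intro sum.cong refl)
    fix e assume "e \<in> edges V E"
    then have "V \<inter> e = e" using sub by blast
    then show "(\<Sum>v\<in>V. of_bool (v \<in> e)) = card e" using fin by simp
  qed
  also have "\<dots> = (\<Sum>e\<in>edges V E. 2)"
    using assms by (intro sum.cong) (auto simp: edges_def simple_graph_def)
  finally show ?thesis by simp
qed

lemma tree_has_cut_vertex:
  assumes tree: "is_tree V E" and "card V \<ge> 3"
  shows "\<exists>w\<in>V. \<not> connected_set V E (V - {w})"
proof (rule ccontr)
  assume "\<not> ?thesis"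
  then have no_cut: "\<forall>w\<in>V. connected_set V E (V - {w})" by blast
  have sg: "simple_graph V E" and gc: "graph_connected V E"
    and card_edges: "card (edges V E) = card V - 1"
    using tree unfolding is_tree_def by auto
  have "finite (edges V E)"
    using sg finite_subset[of "edges V E" "Pow V"] unfolding edges_def simple_graph_def by auto
  have degree: "2 \<le> card {e\<in>edges V E. v \<in> e}" if v: "v \<in> V" for v
  proof -
    obtain u1 u2 where u: "u1 \<noteq> u2" "E v u1" "E v u2"
      using two_neighbours_if_no_cut_vertex[OF sg gc assms(2) no_cut v] by blast
    then have "{{v, u1}, {v, u2}} \<subseteq> {e\<in>edges V E. v \<in> e}"
      using sg v unfolding edges_def simple_graph_def by blast
    then have "card {{v, u1}, {v, u2}} \<le> card {e\<in>edges V E. v \<in> e}"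
      using \<open>finite (edges V E)\<close> by (intro card_mono) simp_all
    moreover have "card {{v, u1}, {v, u2}} = 2"
      using u sg unfolding simple_graph_def by (auto simp: doubleton_eq_iff)
    ultimately show ?thesis by simp
  qed
  have "(\<Sum>v\<in>V. 2) \<le> (\<Sum>v\<in>V. card {e\<in>edges V E. v \<in> e})"
    using degree by (rule sum_mono)
  then have "2 * card V \<le> 2 * card (edges V E)"
    using sum_degree_eq_twice_card_edges[OF sg] by simp
  then show False using card_edges assms(2) by simp
qed

lemma finite_connected_sets: "finite V \<Longrightarrow> finite {C. connected_set V E C}"
  by (rule finite_subset[of _ "Pow V"]) (auto simp: connected_set_def)

lemma card_connected_set_bounds:
  assumes "finite V" and "connected_set V E C"
  shows "1 \<le> card C" and "card C \<le> card V"
  using assms by (auto simp: connected_set_def Suc_le_eq card_gt_0_iff card_mono finite_subset)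

lemma connected_set_eq_iff_card:
  assumes "finite V" and "connected_set V E C"
  shows "C = V \<longleftrightarrow> card C = card V"
  using assms card_subset_eq[OF assms(1)] unfolding connected_set_def by blast

lemma card_connected_singletons:
  assumes "finite V"
  shows "card {C. connected_set V E C \<and> card C = 1} = card V"
proof -
  have "{C. connected_set V E C \<and> card C = 1} = (\<lambda>v. {v}) ` V"
    by (auto simp: connected_set_def card_Suc_eq)
  then show ?thesis by (simp add: card_image)
qed

lemma card_connected_co_singletons_tree:
  assumes tree: "is_tree V E" and "card V \<ge> 3"
  shows "card {C. connected_set V E C \<and> card C = card V - 1} \<le> card V - 1"
proof -
  obtain w where w: "w \<in> V" "\<not> connected_set V E (V - {w})"
    using tree_has_cut_vertex[OF assms] by blast
  have fin: "finite V" using tree unfolding is_tree_def simple_graph_def by simp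
  have "{C. connected_set V E C \<and> card C = card V - 1} \<subseteq> (\<lambda>v. V - {v}) ` (V - {w})"
  proof
    fix C assume "C \<in> {C. connected_set V E C \<and> card C = card V - 1}"
    then have C: "connected_set V E C" "C \<subseteq> V" "card C = card V - 1"
      by (auto simp: connected_set_def)
    then have "card (V - C) = 1" using fin assms(2) by (simp add: card_Diff_subset finite_subset)
    then obtain v where v: "V - C = {v}" by (auto simp: card_Suc_eq)
    then have "C = V - {v}" using C(2) by auto
    then show "C \<in> (\<lambda>v. V - {v}) ` (V - {w})" using v w C(1) by auto
  qed
  then have "card {C. connected_set V E C \<and> card C = card V - 1} \<le> card ((\<lambda>v. V - {v}) ` (V - {w}))"
    using fin by (intro card_mono) auto
  also have "\<dots> \<le> card (V - {w})" using fin by (intro card_image_le) auto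
  finally show ?thesis using w fin by simp
qed

definition state_poly :: "nat \<Rightarrow> nat \<Rightarrow> real poly" where
  "state_poly k m = [:0, 1:] ^ k * [:1, -1:] ^ m"

lemma poly_state_poly: "poly (state_poly k m) x = x ^ k * (1 - x) ^ m"
  by (simp add: state_poly_def poly_power)

lemma poly_pderiv_state_poly:
  "poly (pderiv (state_poly k m)) x = real k * x ^ (k - 1) * (1 - x) ^ m - real m * x ^ k * (1 - x) ^ (m - 1)"
proof -
  have "((\<lambda>x. poly (state_poly k m) x) has_real_derivative
      real k * x ^ (k - 1) * (1 - x) ^ m - real m * x ^ k * (1 - x) ^ (m - 1)) (at x)"
    unfolding poly_state_poly by (auto intro!: derivative_eq_intros simp: algebra_simps)
  then show ?thesis by (rule DERIV_unique[OF poly_DERIV])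
qed

lemma poly_pderiv_state_poly_0: "1 \<le> k \<Longrightarrow> poly (pderiv (state_poly k m)) 0 = of_bool (k = 1)"
  by (cases k) (simp_all add: poly_pderiv_state_poly power_0_left)

lemma poly_pderiv_state_poly_1:
  "poly (pderiv (state_poly k m)) 1 = of_bool (m = 0) * real k - of_bool (m = 1)"
  by (cases m) (simp_all add: poly_pderiv_state_poly power_0_left)

definition nRel_poly :: "'a set \<Rightarrow> ('a \<Rightarrow> 'a \<Rightarrow> bool) \<Rightarrow> real poly" where
  "nRel_poly V E = (\<Sum>C\<in>{C. connected_set V E C}. state_poly (card C) (card V - card C))"

lemma poly_nRel_poly: "poly (nRel_poly V E) = nRel V E"
  by (simp add: fun_eq_iff nRel_poly_def nRel_def poly_sum poly_state_poly)

lemma poly_pderiv_nRel_poly: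
  "poly (pderiv (nRel_poly V E)) x =
     (\<Sum>C\<in>{C. connected_set V E C}. poly (pderiv (state_poly (card C) (card V - card C))) x)"
  by (simp add: nRel_poly_def poly_sum higher_pderiv_sum[where n = 1, simplified])

lemma nRel_0: "finite V \<Longrightarrow> nRel V E 0 = 0"
  unfolding nRel_def by (intro sum.neutral) (auto dest: card_connected_set_bounds)

lemma nRel_1:
  assumes "finite V" and "graph_connected V E"
  shows "nRel V E 1 = 1"
proof -
  have "nRel V E 1 = (\<Sum>C\<in>{C. connected_set V E C}. of_bool (C = V))"
    unfolding nRel_def
  proof (intro sum.cong refl)
    fix C assume "C \<in> {C. connected_set V E C}"
    then have "C = V \<longleftrightarrow> card C = card V" "card C \<le> card V"
      using connected_set_eq_iff_card card_connected_set_bounds assms(1) by auto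
    then show "1 ^ card C * (1 - 1) ^ (card V - card C) = (of_bool (C = V) :: real)"
      by (simp add: power_0_left)
  qed
  also have "\<dots> = real (card ({C. connected_set V E C} \<inter> {C. C = V}))"
    by (simp add: finite_connected_sets assms(1))
  also have "{C. connected_set V E C} \<inter> {C. C = V} = {V}"
    using assms(2) unfolding graph_connected_def by blast
  finally show ?thesis by simp
qed

lemma poly_pderiv_nRel_poly_0:
  assumes "finite V"
  shows "poly (pderiv (nRel_poly V E)) 0 = card V"
proof -
  have "poly (pderiv (nRel_poly V E)) 0 = (\<Sum>C\<in>{C. connected_set V E C}. of_bool (card C = 1))"
    unfolding poly_pderiv_nRel_poly
    using card_connected_set_bounds(1)[OF assms] by (intro sum.cong refl poly_pderiv_state_poly_0) simp
  also have "\<dots> = real (card ({C. connected_set V E C} \<inter> {C. card C = 1}))"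
    by (simp add: finite_connected_sets assms)
  also have "{C. connected_set V E C} \<inter> {C. card C = 1} = {C. connected_set V E C \<and> card C = 1}"
    by blast
  finally show ?thesis using card_connected_singletons[OF assms] by simp
qed

lemma poly_pderiv_nRel_poly_1:
  assumes "finite V" and "graph_connected V E"
  shows "poly (pderiv (nRel_poly V E)) 1 =
    real (card V) - card {C. connected_set V E C \<and> card C = card V - 1}"
proof -
  let ?CS = "{C. connected_set V E C}"
  have "poly (pderiv (nRel_poly V E)) 1 =
      (\<Sum>C\<in>?CS. real (card V) * of_bool (C = V) - of_bool (card C = card V - 1))"
    unfolding poly_pderiv_nRel_poly poly_pderiv_state_poly_1
  proof (intro sum.cong refl)
    fix C assume "C \<in> ?CS"
    then have "C = V \<longleftrightarrow> card V - card C = 0" "card C = card V - 1 \<longleftrightarrow> card V - card C = 1"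
      using connected_set_eq_iff_card card_connected_set_bounds assms(1) by fastforce+
    then show "of_bool (card V - card C = 0) * real (card C) - of_bool (card V - card C = 1)
      = real (card V) * of_bool (C = V) - of_bool (card C = card V - 1)"
      by auto
  qed
  also have "\<dots> = real (card V) * (\<Sum>C\<in>?CS. of_bool (C = V)) - (\<Sum>C\<in>?CS. of_bool (card C = card V - 1))"
    by (simp only: sum_subtractf sum_distrib_left)
  also have "(\<Sum>C\<in>?CS. of_bool (C = V)) = (1::real)"
    using assms by (simp add: finite_connected_sets graph_connected_def)
  also have "(\<Sum>C\<in>?CS. of_bool (card C = card V - 1)) =
      real (card {C. connected_set V E C \<and> card C = card V - 1})"
    using assms(1) by (simp add: finite_connected_sets Int_def)
  finally show ?thesis by simp
qed

lemma deriv_poly: "deriv (poly p) = poly (pderiv p)" for p :: "real poly"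
  by (rule ext) (rule DERIV_imp_deriv, rule poly_DERIV)

theorem theorem3p2:
  fixes V :: "'a set" and E :: "'a \<Rightarrow> 'a \<Rightarrow> bool"
  assumes "is_tree V E" and "card V \<ge> 4"
  shows "\<exists>x\<in>{0<..<1}. inflection_point (nRel V E) x"
proof -
  define P where "P = nRel_poly V E"
  have fin: "finite V" and conn: "graph_connected V E"
    using assms(1) unfolding is_tree_def simple_graph_def by auto
  have secant: "poly P 1 - poly P 0 = 1"
    using nRel_0[OF fin] nRel_1[OF fin conn] by (simp add: P_def poly_nRel_poly)
  have "poly P 1 - poly P 0 < poly (pderiv P) 0"
    using secant assms(2) by (simp add: P_def poly_pderiv_nRel_poly_0[OF fin])
  moreover have "poly P 1 - poly P 0 \<le> poly (pderiv P) 1"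
    using secant card_connected_co_singletons_tree[OF assms(1)] assms(2)
    by (simp add: P_def poly_pderiv_nRel_poly_1[OF fin conn] of_nat_diff)
  ultimately obtain a b where "a \<in> {0<..<1}" "poly (pderiv (pderiv P)) a < 0"
    and "b \<in> {0<..<1}" "poly (pderiv (pderiv P)) b > 0"
    using poly_pderiv2_neg_if_pderiv_gt_secant poly_pderiv2_pos_if_pderiv_ge_secant by blast
  then obtain x where "x \<in> {0<..<1}" "changes_sign_at (poly (pderiv (pderiv P))) x"
    using poly_changes_sign_in_interval by blast
  then show ?thesis
    using inflection_point_if_changes_sign by (metis P_def deriv_poly poly_nRel_poly)
qed

end
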